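(* Let $C$ be a self-dual $[20,10,9]$ code over $\mathrm{GF}(7)$ with $A_7(C)\cong D_{20}^+$. Then there exists a skew-Hadamard matrix $H$ of order $20$ such that $C$ is generated over $\mathrm{GF}(7)$ by the row vectors of $H+2I$ (reduced modulo $7$).
   Context: An $[n,k,d]$ code over $\mathrm{GF}(p)$ is a $k$-dimensional subspace of $\mathrm{GF}(p)^n$ with minimum nonzero Hamming weight $d$; it is self-dual if $C=C^\perp$ under the standard inner product. Construction A: let $\varepsilon_1,\dots,\varepsilon_{20}$ be an orthogonal basis of $\mathbb{R}^{20}$ with $(\varepsilon_i,\varepsilon_j)=7\delta_{i,j}$, and $A_7(C)=\{\frac17\sum_{i=1}^{20} x_i\varepsilon_i\mid x\in\mathbb{Z}^{20},\ x\bmod 7\in C\}$. Lattices $L,L'$ are isomorphic if $L'=\{xA\mid x\in L\}$ for an orthogonal matrix $A$. With $e_1,\dots,e_{20}$ the standard basis of $\mathbb{R}^{20}$: $D_{20}=\{\sum\alpha_ie_i\mid\alpha\in\mathbb{Z}^{20},\ \sum\alpha_i\equiv0\pmod 2\}$, $D_{20}^+=\langle D_{20},\frac12\mathbf 1\rangle$ with $\mathbf 1$ the all-one vector. A Hadamard matrix of order $n$ is an $n\times n$ $(1,-1)$-matrix $H$ with $HH^\top=nI$; it is skew-Hadamard if moreover $H+H^\top=2I$. *)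

theory Defs
  imports "HOL-Analysis.Analysis" "Berlekamp_Zassenhaus.Finite_Field"
begin

text \<open>Codes of length n over a finite field F are subsets of F^n, here the type 'f ^ 'n
  with 'n a finite index type of cardinality n.  GF(p) is 'p mod_ring with CARD('p) = p prime.\<close>

definition code_inner :: "'f::field ^ 'n \<Rightarrow> 'f ^ 'n \<Rightarrow> 'f" where
  "code_inner x y = (\<Sum>i\<in>UNIV. x $ i * y $ i)"

definition dual_code :: "('f::field ^ 'n) set \<Rightarrow> ('f ^ 'n) set" where
  "dual_code C = {y. \<forall>x\<in>C. code_inner x y = 0}"

definition self_dual :: "('f::field ^ 'n) set \<Rightarrow> bool" where
  "self_dual C \<longleftrightarrow> C = dual_code C"

definition hamming_weight :: "'f::zero ^ 'n \<Rightarrow> nat" where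
  "hamming_weight x = card {i. x $ i \<noteq> 0}"

definition min_weight :: "('f::zero ^ 'n) set \<Rightarrow> nat" where
  "min_weight C = Min (hamming_weight ` (C - {0}))"

definition is_nkd_code :: "nat \<Rightarrow> nat \<Rightarrow> nat \<Rightarrow> ('f::field ^ 'n) set \<Rightarrow> bool" where
  "is_nkd_code n k d C \<longleftrightarrow> CARD('n) = n \<and> vec.subspace C \<and> vec.dim C = k \<and> min_weight C = d"

text \<open>Construction A with the orthogonal basis eps_i = sqrt p * e_i, (eps_i,eps_j) = p delta_ij:
  A_p(C) = { (1/p) sum x_i eps_i | x in Z^n, x mod p in C }.\<close>
definition constructionA :: "('p::prime_card mod_ring ^ 'n) set \<Rightarrow> (real ^ 'n) set" where
  "constructionA C =
     {(\<chi> i. (1 / real CARD('p)) * real_of_int (x $ i) * sqrt (real CARD('p))) | x :: int ^ 'n.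
        (\<chi> i. (of_int (x $ i) :: 'p mod_ring)) \<in> C}"

definition lattice_iso :: "(real ^ 'n) set \<Rightarrow> (real ^ 'n) set \<Rightarrow> bool" where
  "lattice_iso L L' \<longleftrightarrow> (\<exists>A :: real ^ 'n ^ 'n. orthogonal_matrix A \<and> L' = (\<lambda>x. x v* A) ` L)"

definition D_lattice :: "(real ^ 'n) set" where
  "D_lattice = {(\<chi> i. real_of_int (a $ i)) | a :: int ^ 'n. even (\<Sum>i\<in>UNIV. a $ i)}"

definition D_plus_lattice :: "(real ^ 'n) set" where
  "D_plus_lattice = {v + real_of_int k *\<^sub>R (\<chi> i. 1 / 2) | v k. v \<in> D_lattice}"

definition hadamard_matrix :: "int ^ 'n ^ 'n \<Rightarrow> bool" where
  "hadamard_matrix H \<longleftrightarrow> (\<forall>i j. H $ i $ j = 1 \<or> H $ i $ j = -1) \<and>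
     H ** transpose H = mat (int CARD('n))"

definition skew_hadamard_matrix :: "int ^ 'n ^ 'n \<Rightarrow> bool" where
  "skew_hadamard_matrix H \<longleftrightarrow> hadamard_matrix H \<and> H + transpose H = mat 2"

definition mat_mod :: "int ^ 'n ^ 'm \<Rightarrow> 'p::prime_card mod_ring ^ 'n ^ 'm" where
  "mat_mod M = (\<chi> i j. of_int (M $ i $ j))"

end

theory Submission
  imports Defs
begin

text \<open>
  Under the isometry between A_7(C) and D_20^+, the orthogonal frame \<open>sqrt 7 e_r\<close> of
  A_7(C) becomes a frame of D_20^+ of norm 7. Twice these vectors are integral with odd entries
  and norm 28 = 20 + 8, so each has one entry \<plusminus>3 and all others \<plusminus>1; the
  integer matrix B (\<open>double_frame\<close>) they form satisfies B B^T = 28 I, hence also B^T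
  B = 28 I, and the positions of the entries \<plusminus>3 form a permutation. The frame
  coordinates of a lattice vector y are (B y)/2, and reduced mod 7 they are a codeword. For y =
  e_a \<plusminus> e_b this codeword has norm 14, so the minimum distance 9 forbids two of its
  entries to be \<plusminus>2; this is exactly what makes the matrix N
  (\<open>pivot_matrix\<close>) of signed, permuted columns of B, normalised to have diagonal 3,
  satisfy N + N^T = 6 I. Then H = N - 2 I is skew-Hadamard, and C, spanned by the columns of B mod
  7, is spanned by the rows of H + 2 I.
\<close>

lemma of_int_mod_ring_eq_iff:
  "(of_int a :: 'a::nontriv mod_ring) = of_int b \<longleftrightarrow> a mod CARD('a) = b mod CARD('a)"
  unfolding of_int_of_int_mod_ring by transfer simp

lemma inner_vector_matrix_orthogonal:
  fixes A :: "real^'n^'n"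
  assumes "orthogonal_matrix A"
  shows "inner (x v* A) (y v* A) = inner x y"
proof -
  have "A *v (y v* A) = y"
    using assms unfolding orthogonal_matrix_def
    by (metis matrix_vector_mul_assoc matrix_vector_mul_lid transpose_matrix_vector)
  then show ?thesis
    by (simp add: dot_lmul_matrix)
qed

lemma min_weight_le_hamming_weight:
  fixes C :: "('f::zero ^ 'n) set"
  assumes "c \<in> C" "c \<noteq> 0"
  shows "min_weight C \<le> hamming_weight c"
proof -
  have "hamming_weight ` (C - {0}) \<subseteq> {..CARD('n)}"
    unfolding hamming_weight_def by (auto intro: card_mono)
  then have "finite (hamming_weight ` (C - {0}))"
    using finite_subset by blast
  then show ?thesis
    unfolding min_weight_def using assms by (intro Min_le) auto
qed

lemma transpose_mul_eq_mat:
  fixes M :: "'a::field^'n^'n"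
  assumes "M ** transpose M = mat c" "c \<noteq> 0"
  shows "transpose M ** M = mat c"
proof -
  define M' where "M' = (\<chi> i j. transpose M $ i $ j / c)"
  have "M ** M' = mat 1"
    using assms unfolding M'_def
    by (simp add: vec_eq_iff matrix_matrix_mult_def mat_def sum_divide_distrib[symmetric])
  then have "M' ** M = mat 1"
    using matrix_left_right_inverse by blast
  then show ?thesis
    using assms(2) unfolding M'_def
    by (simp add: vec_eq_iff matrix_matrix_mult_def mat_def sum_divide_distrib[symmetric]
        divide_eq_eq split: if_splits)
qed

lemma int_transpose_mul_eq_mat:
  fixes M :: "int^'n^'n"
  assumes "M ** transpose M = mat c" "c \<noteq> 0"
  shows "transpose M ** M = mat c"
proof -
  define R :: "real^'n^'n" where "R = (\<chi> i j. of_int (M $ i $ j))"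
  have R_mul: "(R ** transpose R) $ i $ j = of_int ((M ** transpose M) $ i $ j)"
    and R_tmul: "(transpose R ** R) $ i $ j = of_int ((transpose M ** M) $ i $ j)" for i j
    unfolding R_def by (simp_all add: matrix_matrix_mult_def transpose_def)
  have "R ** transpose R = mat (of_int c)"
    using R_mul by (simp add: vec_eq_iff assms(1) mat_def)
  then have "transpose R ** R = mat (of_int c)"
    using assms(2) by (intro transpose_mul_eq_mat) auto
  then have "real_of_int ((transpose M ** M) $ i $ j) = real_of_int (mat c $ i $ j)" for i j
    unfolding R_tmul[symmetric] by (simp add: mat_def)
  then show ?thesis
    by (simp add: vec_eq_iff)
qed

lemma odd_squares_sum_eq_card_plus_8:
  fixes g :: "'n::finite \<Rightarrow> int"
  assumes odd: "\<And>j. odd (g j)" and sum: "(\<Sum>j\<in>UNIV. (g j)\<^sup>2) = int CARD('n) + 8"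
  shows "\<exists>a. \<bar>g a\<bar> = 3 \<and> (\<forall>j. j \<noteq> a \<longrightarrow> \<bar>g j\<bar> = 1)"
proof -
  define h where "h j = (g j)\<^sup>2 - 1" for j
  have h_sum: "(\<Sum>j\<in>UNIV. h j) = 8"
    using sum by (simp add: h_def sum_subtractf)
  have h_values: "h j = 0 \<or> h j \<ge> 8" for j
  proof -
    obtain t where "g j = 2 * t + 1"
      using odd[of j] by (metis oddE)
    then have "h j = 4 * (t * (t + 1))"
      by (simp add: h_def algebra_simps power2_eq_square)
    moreover obtain u where "t * (t + 1) = 2 * u"
      by (metis evenE even_mult_iff even_plus_one_iff)
    moreover have "t * (t + 1) \<ge> 0"
      by (cases "t \<ge> 0") (auto simp: mult_nonpos_nonpos)
    ultimately show ?thesis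
      by presburger
  qed
  then have h_nonneg: "h j \<ge> 0" for j
    by (metis order.trans zero_le_numeral order.refl)
  obtain a where "h a \<noteq> 0"
    using h_sum by fastforce
  then have "h a \<ge> 8"
    using h_values by blast
  moreover have "(\<Sum>j\<in>UNIV. h j) = h a + (\<Sum>j\<in>UNIV - {a}. h j)"
    by (simp add: sum.remove)
  moreover have "(\<Sum>j\<in>UNIV - {a}. h j) \<ge> 0"
    by (simp add: h_nonneg sum_nonneg)
  ultimately have "h a = 8" "(\<Sum>j\<in>UNIV - {a}. h j) = 0"
    using h_sum by linarith+
  then have h_zero: "h j = 0" if "j \<noteq> a" for j
    using sum_nonneg_eq_0_iff[of "UNIV - {a}" h] h_nonneg that by auto
  have "\<bar>g j\<bar> = 1" if "j \<noteq> a" for j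
    using power2_eq_iff_nonneg[of "\<bar>g j\<bar>" 1] h_zero[OF that] by (simp add: h_def)
  moreover have "\<bar>g a\<bar> = 3"
    using power2_eq_iff_nonneg[of "\<bar>g a\<bar>" 3] \<open>h a = 8\<close> by (simp add: h_def)
  ultimately show ?thesis
    by blast
qed

lemma card_nonzero_plus_6_le_sum_squares:
  fixes x :: "'n::finite \<Rightarrow> int"
  assumes "k \<noteq> i" "\<bar>x k\<bar> = 2" "\<bar>x i\<bar> = 2"
  shows "int (card {r. x r \<noteq> 0}) + 6 \<le> (\<Sum>r\<in>UNIV. (x r)\<^sup>2)"
proof -
  have "(if x r \<noteq> 0 then 1 else 0) + (if r = k then 3 else 0) + (if r = i then 3 else 0)
      \<le> (x r)\<^sup>2" for r
  proof (cases "r = k \<or> r = i")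
    case True
    then have "\<bar>x r\<bar> = 2"
      using assms by auto
    then have "(x r)\<^sup>2 = 4"
      by (metis power2_abs power2_eq_square numeral_times_numeral num_double)
    then show ?thesis
      using True assms(1) by auto
  next
    case False
    have "(x r)\<^sup>2 \<ge> 1" if "x r \<noteq> 0"
    proof -
      have "\<bar>x r\<bar> \<ge> 1"
        using that by linarith
      then show ?thesis
        using one_le_power[of "\<bar>x r\<bar>" 2] by simp
    qed
    then show ?thesis
      using False by auto
  qed
  then have "(\<Sum>r\<in>UNIV. (if x r \<noteq> 0 then 1 else 0) + (if r = k then 3 else 0)
      + (if r = i then 3 else (0::int))) \<le> (\<Sum>r\<in>UNIV. (x r)\<^sup>2)"
    by (rule sum_mono)
  then show ?thesis
    by (simp add: sum.distrib sum.If_cases)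
qed

lemma of_int_vec_in_D_plus_lattice:
  fixes u :: "int^'n"
  assumes "even (\<Sum>i\<in>UNIV. u $ i)"
  shows "(\<chi> i. real_of_int (u $ i)) \<in> D_plus_lattice"
proof -
  have "(\<chi> i. real_of_int (u $ i)) \<in> D_lattice"
    unfolding D_lattice_def using assms by blast
  then have "(\<chi> i. real_of_int (u $ i)) + real_of_int 0 *\<^sub>R (\<chi> i. 1 / 2) \<in> D_plus_lattice"
    unfolding D_plus_lattice_def by blast
  then show ?thesis
    by simp
qed

lemma D_plus_lattice_double_integral:
  assumes "y \<in> D_plus_lattice"
  obtains a :: "int^'n" and m :: int
  where "even (\<Sum>i\<in>UNIV. a $ i)" "\<And>j. 2 * y $ j = of_int (2 * a $ j + m)"
  using assms unfolding D_plus_lattice_def D_lattice_def by auto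

lemma D_plus_lattice_odd_norm:
  fixes y :: "real^'n"
  assumes "even CARD('n)" "y \<in> D_plus_lattice" "inner y y = of_int k" "odd k"
  obtains z :: "int^'n" where "\<And>j. odd (z $ j)" "\<And>j. 2 * y $ j = of_int (z $ j)"
proof -
  obtain a :: "int^'n" and m where a: "even (\<Sum>i\<in>UNIV. a $ i)"
    and y: "\<And>j. 2 * y $ j = of_int (2 * a $ j + m)"
    using D_plus_lattice_double_integral[OF assms(2)] by blast
  have "odd m"
  proof
    \<comment> \<open>otherwise y lies in D_n (n being even), whose vectors have even norm\<close>
    assume "even m"
    then obtain t where t: "m = 2 * t" ..
    define v where "v j = a $ j + t" for j
    have "y $ j = of_int (v j)" for j
      using y[of j] unfolding v_def t by simp
    then have "real_of_int k = real_of_int (\<Sum>j\<in>UNIV. v j * v j)"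
      using assms(3) by (simp add: inner_vec_def)
    then have "k = (\<Sum>j\<in>UNIV. v j * v j)"
      by (simp only: of_int_eq_iff)
    moreover have "even (\<Sum>j\<in>UNIV. v j * v j - v j)"
      by (rule dvd_sum) simp
    moreover have "even (\<Sum>j\<in>UNIV. v j)"
      using a assms(1) by (simp add: v_def sum.distrib)
    ultimately show False
      using assms(4) by (simp add: sum_subtractf)
  qed
  then show ?thesis
    using y by (intro that[of "\<chi> j. 2 * a $ j + m"]) auto
qed

lemma skew_hadamard_matrix_diff_mat_2:
  fixes N :: "int^'n^'n"
  assumes diag: "\<And>i. N $ i $ i = 3"
    and off_diag: "\<And>i j. i \<noteq> j \<Longrightarrow> N $ i $ j = 1 \<or> N $ i $ j = -1"
    and orth: "N ** transpose N = mat (int CARD('n) + 8)"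
    and skew: "N + transpose N = mat 6"
  shows "skew_hadamard_matrix (N - mat 2)"
  unfolding skew_hadamard_matrix_def hadamard_matrix_def
proof (intro conjI allI)
  fix i j
  show "(N - mat 2) $ i $ j = 1 \<or> (N - mat 2) $ i $ j = - 1"
    using diag off_diag by (cases "i = j") (simp_all add: mat_def)
next
  have "N $ i $ j + N $ j $ i = mat 6 $ i $ j" for i j
    using skew unfolding vec_eq_iff by (simp add: transpose_def)
  moreover have "(\<Sum>m\<in>UNIV. N $ i $ m * N $ j $ m) = mat (int CARD('n) + 8) $ i $ j" for i j
    using orth unfolding vec_eq_iff by (simp add: matrix_matrix_mult_def transpose_def)
  moreover have "((N - mat 2) ** transpose (N - mat 2)) $ i $ j
      = (\<Sum>m\<in>UNIV. N $ i $ m * N $ j $ m) - 2 * (N $ i $ j + N $ j $ i) + mat 4 $ i $ j" for i j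
  proof -
    have "(N $ i $ m - mat 2 $ i $ m) * (N $ j $ m - mat 2 $ j $ m)
        = N $ i $ m * N $ j $ m - (if m = j then 2 * N $ i $ m else 0)
          - (if m = i then 2 * N $ j $ m else 0) + (if m = i then mat 4 $ i $ j else 0)" for m
      by (auto simp: mat_def algebra_simps)
    then show ?thesis
      by (simp add: matrix_matrix_mult_def transpose_def sum.distrib sum_subtractf)
  qed
  ultimately have "((N - mat 2) ** transpose (N - mat 2)) $ i $ j = mat (int CARD('n)) $ i $ j" for i j
    by (simp add: mat_def)
  then show "(N - mat 2) ** transpose (N - mat 2) = mat (int CARD('n))"
    by (simp add: vec_eq_iff)
next
  have "(N - mat 2 + transpose (N - mat 2)) $ i $ j = mat 2 $ i $ j" for i j
    using skew diag unfolding vec_eq_iff by (simp add: transpose_def mat_def)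
  then show "N - mat 2 + transpose (N - mat 2) = mat 2"
    by (simp add: vec_eq_iff)
qed

lemma sgn_mult_eq_minus_sgn_mult:
  fixes \<alpha> \<beta> \<gamma> \<delta> :: int
  assumes "\<bar>\<alpha>\<bar> = 3" "\<bar>\<delta>\<bar> = 3" "\<bar>\<beta>\<bar> = 1" "\<bar>\<gamma>\<bar> = 1"
    and "\<And>s. s = 1 \<or> s = -1 \<Longrightarrow> \<not> (\<bar>\<alpha> + s * \<beta>\<bar> = 4 \<and> \<bar>\<gamma> + s * \<delta>\<bar> = 4)"
  shows "sgn \<alpha> * \<gamma> = - (sgn \<delta> * \<beta>)"
proof -
  have "\<alpha> = 3 \<or> \<alpha> = -3" "\<delta> = 3 \<or> \<delta> = -3" "\<beta> = 1 \<or> \<beta> = -1" "\<gamma> = 1 \<or> \<gamma> = -1"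
    using assms(1-4) by linarith+
  moreover have "\<not> (\<bar>\<alpha> + \<beta>\<bar> = 4 \<and> \<bar>\<gamma> + \<delta>\<bar> = 4)" "\<not> (\<bar>\<alpha> - \<beta>\<bar> = 4 \<and> \<bar>\<gamma> - \<delta>\<bar> = 4)"
    using assms(5)[of 1] assms(5)[of "-1"] by simp_all
  ultimately show ?thesis
    by (elim disjE) simp_all
qed

locale D20_plus_code =
  fixes C :: "('p::prime_card mod_ring ^ 'n) set" and A :: "real^'n^'n"
  assumes card_p: "CARD('p) = 7" and card_n: "CARD('n) = 20"
    and subspace_C: "vec.subspace C" and min_weight_C: "min_weight C = 9"
    and orthogonal_A: "orthogonal_matrix A"
    and D_plus_lattice_eq: "D_plus_lattice = (\<lambda>x. x v* A) ` constructionA C"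
begin

abbreviation reduce :: "int^'n \<Rightarrow> 'p mod_ring^'n" where
  "reduce x \<equiv> \<chi> i. of_int (x $ i)"

lemma seven_eq_0: "(7 :: 'p mod_ring) = 0"
  using of_nat_card_eq_0[where 'a='p] by (simp add: card_p)

definition lift :: "int^'n \<Rightarrow> real^'n" where
  "lift x = (\<chi> i. of_int (x $ i) / sqrt 7)"

lemma constructionA_eq: "constructionA C = lift ` {x. reduce x \<in> C}"
proof -
  have "1 / 7 * r * sqrt 7 = r / sqrt 7" for r :: real
    by (simp add: field_simps flip: power2_eq_square)
  then show ?thesis
    unfolding constructionA_def lift_def card_p by auto
qed

text \<open>\<open>frame r\<close> is the image in D_20^+ of the point \<open>lift (7 e_r) = sqrt 7 e_r\<close> of A_7(C);
  pairing with it reads off the integer coordinates of a point of A_7(C).\<close>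
definition frame :: "'n \<Rightarrow> real^'n" where
  "frame r = (\<chi> j. if j = r then sqrt 7 else 0) v* A"

lemma inner_lift_frame: "inner (lift x v* A) (frame r) = of_int (x $ r)"
proof -
  have "inner (lift x v* A) (frame r) = inner (lift x) (\<chi> j. if j = r then sqrt 7 else 0)"
    unfolding frame_def by (rule inner_vector_matrix_orthogonal[OF orthogonal_A])
  also have "\<dots> = of_int (x $ r)"
    by (simp add: lift_def inner_vec_def if_distrib[of "(*) _"] cong: if_cong)
  finally show ?thesis .
qed

lemma inner_frame_frame: "inner (frame k) (frame l) = (if k = l then 7 else 0)"
  unfolding frame_def inner_vector_matrix_orthogonal[OF orthogonal_A]
  by (simp add: inner_vec_def if_distrib[of "(*) _"] cong: if_cong)

lemma D_plus_lattice_coordinates: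
  assumes "y \<in> D_plus_lattice"
  obtains x where "reduce x \<in> C" "\<And>r. inner y (frame r) = of_int (x $ r)"
  using assms inner_lift_frame unfolding D_plus_lattice_eq constructionA_eq by blast

lemma codeword_lift_in_D_plus_lattice:
  assumes "reduce x \<in> C"
  obtains y where "y \<in> D_plus_lattice" "\<And>r. inner y (frame r) = of_int (x $ r)"
  using assms inner_lift_frame unfolding D_plus_lattice_eq constructionA_eq by blast

lemma frame_in_D_plus_lattice: "frame r \<in> D_plus_lattice"
proof -
  define x :: "int^'n" where "x = (\<chi> i. if i = r then 7 else 0)"
  have "reduce x = 0"
    by (simp add: x_def vec_eq_iff seven_eq_0)
  then have "reduce x \<in> C"
    using vec.subspace_0[OF subspace_C] by simp
  moreover have "lift x = (\<chi> j. if j = r then sqrt 7 else 0)"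
    by (simp add: lift_def x_def vec_eq_iff field_simps flip: power2_eq_square)
  ultimately show ?thesis
    unfolding D_plus_lattice_eq constructionA_eq frame_def by (metis image_eqI mem_Collect_eq)
qed

definition double_frame :: "int^'n^'n" where
  "double_frame = (\<chi> k j. \<lfloor>2 * frame k $ j\<rfloor>)"

lemma
  shows of_int_double_frame: "real_of_int (double_frame $ k $ j) = 2 * frame k $ j"
    and odd_double_frame: "odd (double_frame $ k $ j)"
proof -
  have "even CARD('n)" "inner (frame k) (frame k) = of_int 7" "odd (7::int)"
    by (simp_all add: card_n inner_frame_frame)
  then obtain z :: "int^'n" where "\<And>j. odd (z $ j)" "\<And>j. 2 * frame k $ j = of_int (z $ j)"
    using D_plus_lattice_odd_norm[OF _ frame_in_D_plus_lattice] by blast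
  then show "real_of_int (double_frame $ k $ j) = 2 * frame k $ j" "odd (double_frame $ k $ j)"
    by (simp_all add: double_frame_def)
qed

lemma inner_frame_eq: "inner y (frame k) = (\<Sum>j\<in>UNIV. y $ j * of_int (double_frame $ k $ j)) / 2"
  by (simp add: inner_vec_def of_int_double_frame sum_divide_distrib)

lemma double_frame_mul_transpose: "double_frame ** transpose double_frame = mat 28"
proof -
  have "real_of_int ((double_frame ** transpose double_frame) $ k $ l) = 4 * inner (frame k) (frame l)"
    for k l
    by (simp add: matrix_matrix_mult_def transpose_def inner_vec_def of_int_double_frame
        sum_distrib_left algebra_simps)
  then have "real_of_int ((double_frame ** transpose double_frame) $ k $ l) = real_of_int (mat 28 $ k $ l)"
    for k l
    by (simp add: inner_frame_frame mat_def)
  then show ?thesis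
    by (simp add: vec_eq_iff)
qed

lemma transpose_mul_double_frame: "transpose double_frame ** double_frame = mat 28"
  by (rule int_transpose_mul_eq_mat[OF double_frame_mul_transpose]) simp

lemma D_lattice_codeword:
  assumes "even (\<Sum>i\<in>UNIV. u $ i)"
  obtains x where "reduce x \<in> C" "\<And>r. 2 * x $ r = (double_frame *v u) $ r"
proof -
  obtain x where x: "reduce x \<in> C"
    and coord: "\<And>r. inner (\<chi> i. real_of_int (u $ i)) (frame r) = of_int (x $ r)"
    using D_plus_lattice_coordinates[OF of_int_vec_in_D_plus_lattice[OF assms]] by blast
  have "real_of_int (2 * x $ r) = real_of_int ((double_frame *v u) $ r)" for r
    using coord[of r] by (simp add: inner_frame_eq matrix_vector_mult_def mult.commute)
  then show ?thesis
    using that x by (simp only: of_int_eq_iff)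
qed

lemma column_in_code: "column a (mat_mod double_frame) \<in> C"
proof -
  define u :: "int^'n" where "u = (\<chi> j. if j = a then 2 else 0)"
  have "even (\<Sum>i\<in>UNIV. u $ i)"
    by (simp add: u_def)
  then obtain x where "reduce x \<in> C" "\<And>r. 2 * x $ r = (double_frame *v u) $ r"
    using D_lattice_codeword by blast
  moreover have "(double_frame *v u) $ r = 2 * double_frame $ r $ a" for r
    by (simp add: u_def matrix_vector_mult_def if_distrib[of "(*) _"] cong: if_cong)
  ultimately show ?thesis
    by (simp add: column_def mat_mod_def)
qed

lemma code_subset_span_columns: "C \<subseteq> vec.span (columns (mat_mod double_frame))"
proof
  fix c
  assume "c \<in> C"
  define x where "x = (\<chi> i. to_int_mod_ring (c $ i))"
  have c: "reduce x = c"
    by (simp add: x_def vec_eq_iff of_int_of_int_mod_ring)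
  obtain y where "y \<in> D_plus_lattice" and y: "\<And>r. inner y (frame r) = of_int (x $ r)"
    using codeword_lift_in_D_plus_lattice \<open>c \<in> C\<close> c by metis
  then obtain a :: "int^'n" and m where double_y: "\<And>j. 2 * y $ j = of_int (2 * a $ j + m)"
    using D_plus_lattice_double_integral by metis
  define z :: "int^'n" where "z = (\<chi> j. 2 * a $ j + m)"
  have "real_of_int (4 * x $ r) = real_of_int ((double_frame *v z) $ r)" for r
  proof -
    have "real_of_int (4 * x $ r) = 2 * (\<Sum>j\<in>UNIV. y $ j * of_int (double_frame $ r $ j))"
      using y[of r] by (simp add: inner_frame_eq)
    also have "\<dots> = (\<Sum>j\<in>UNIV. (2 * y $ j) * of_int (double_frame $ r $ j))"
      by (simp add: sum_distrib_left mult.assoc)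
    also have "\<dots> = real_of_int ((double_frame *v z) $ r)"
      by (simp only: double_y) (simp add: z_def matrix_vector_mult_def mult.commute)
    finally show ?thesis .
  qed
  then have x4: "4 * x $ r = (double_frame *v z) $ r" for r
    by (simp only: of_int_eq_iff)
  \<comment> \<open>as 8 = 1 mod 7, the relation 4 x = B z between half-integral vectors gives c = 2 B z\<close>
  have "c $ r = of_int (x $ r) + 7 * of_int (x $ r)" for r
    using c by (auto simp: seven_eq_0)
  then have "c $ r = of_int (2 * (4 * x $ r))" for r
    by simp
  then have "c $ r = of_int (2 * (double_frame *v z) $ r)" for r
    by (simp only: x4)
  then have "c $ r = (\<Sum>j\<in>UNIV. of_int (2 * z $ j) * mat_mod double_frame $ r $ j)" for r
    by (simp add: matrix_vector_mult_def mat_mod_def sum_distrib_left algebra_simps)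
  then have "c = (\<Sum>j\<in>UNIV. of_int (2 * z $ j) *s column j (mat_mod double_frame))"
    by (simp add: vec_eq_iff column_def)
  also have "\<dots> \<in> vec.span (columns (mat_mod double_frame))"
    by (intro vec.span_sum vec.span_scale vec.span_base) (auto simp: columns_def)
  finally show "c \<in> vec.span (columns (mat_mod double_frame))" .
qed

lemma code_eq_span_columns: "C = vec.span (columns (mat_mod double_frame))"
  using code_subset_span_columns column_in_code
  by (intro antisym vec.span_minimal[OF _ subspace_C]) (auto simp: columns_def)

lemma double_frame_row_shape: "\<exists>a. \<bar>double_frame $ k $ a\<bar> = 3 \<and> (\<forall>j. j \<noteq> a \<longrightarrow> \<bar>double_frame $ k $ j\<bar> = 1)"
proof (rule odd_squares_sum_eq_card_plus_8)
  show "(\<Sum>j\<in>UNIV. (double_frame $ k $ j)\<^sup>2) = int CARD('n) + 8"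
  proof -
    have "(double_frame ** transpose double_frame) $ k $ k = 28"
      by (simp add: double_frame_mul_transpose mat_def)
    then show ?thesis
      by (simp add: matrix_matrix_mult_def transpose_def power2_eq_square card_n)
  qed
qed (rule odd_double_frame)

lemma double_frame_column_shape:
  "\<exists>k. \<bar>double_frame $ k $ a\<bar> = 3 \<and> (\<forall>i. i \<noteq> k \<longrightarrow> \<bar>double_frame $ i $ a\<bar> = 1)"
proof (rule odd_squares_sum_eq_card_plus_8)
  show "(\<Sum>i\<in>UNIV. (double_frame $ i $ a)\<^sup>2) = int CARD('n) + 8"
  proof -
    have "(transpose double_frame ** double_frame) $ a $ a = 28"
      by (simp add: transpose_mul_double_frame mat_def)
    then show ?thesis
      by (simp add: matrix_matrix_mult_def transpose_def power2_eq_square card_n)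
  qed
qed (rule odd_double_frame)

definition pivot :: "'n \<Rightarrow> 'n" where
  "pivot k = (SOME a. \<bar>double_frame $ k $ a\<bar> = 3)"

lemma
  shows abs_double_frame_pivot: "\<bar>double_frame $ k $ pivot k\<bar> = 3"
    and abs_double_frame_off_pivot: "j \<noteq> pivot k \<Longrightarrow> \<bar>double_frame $ k $ j\<bar> = 1"
proof -
  obtain a where a: "\<bar>double_frame $ k $ a\<bar> = 3" "\<And>j. j \<noteq> a \<Longrightarrow> \<bar>double_frame $ k $ j\<bar> = 1"
    using double_frame_row_shape by blast
  then have "pivot k = a"
    unfolding pivot_def by (metis (mono_tags, lifting) numeral_eq_one_iff semiring_norm(86) someI_ex)
  then show "\<bar>double_frame $ k $ pivot k\<bar> = 3" "j \<noteq> pivot k \<Longrightarrow> \<bar>double_frame $ k $ j\<bar> = 1"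
    using a by auto
qed

lemma abs_double_frame_pivot_column:
  assumes "i \<noteq> k"
  shows "\<bar>double_frame $ i $ pivot k\<bar> = 1"
proof -
  obtain r where r: "\<bar>double_frame $ r $ pivot k\<bar> = 3"
    "\<And>i. i \<noteq> r \<Longrightarrow> \<bar>double_frame $ i $ pivot k\<bar> = 1"
    using double_frame_column_shape by blast
  then have "r = k"
    using abs_double_frame_pivot[of k] by fastforce
  then show ?thesis
    using r(2) assms by blast
qed

lemma bij_pivot: "bij pivot"
proof -
  have "inj pivot"
    by (rule injI) (metis abs_double_frame_pivot abs_double_frame_pivot_column numeral_eq_one_iff
        semiring_norm(86))
  then show ?thesis
    by (simp add: bij_def finite_UNIV_inj_surj)
qed

text \<open>The minimum distance enters only here: a vector e_a \<plusminus> e_b of D_20 yields a codeword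
  of norm 14 which, having two entries \<plusminus>2, would have weight at most 8.\<close>
lemma no_double_four:
  assumes "k \<noteq> i" "a \<noteq> b" "s = 1 \<or> s = -1"
  shows "\<not> (\<bar>double_frame $ k $ a + s * double_frame $ k $ b\<bar> = 4
    \<and> \<bar>double_frame $ i $ a + s * double_frame $ i $ b\<bar> = 4)"
proof
  let ?B = double_frame
  assume fours: "\<bar>?B $ k $ a + s * ?B $ k $ b\<bar> = 4 \<and> \<bar>?B $ i $ a + s * ?B $ i $ b\<bar> = 4"
  define u :: "int^'n" where "u = (\<chi> j. (if j = a then 1 else 0) + (if j = b then s else 0))"
  have "even (\<Sum>j\<in>UNIV. u $ j)"
    using assms(3) by (auto simp: u_def sum.distrib)
  then obtain x where "reduce x \<in> C" and x: "\<And>r. 2 * x $ r = (?B *v u) $ r"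
    using D_lattice_codeword by blast
  have Bu: "(?B *v u) $ r = ?B $ r $ a + s * ?B $ r $ b" for r
    using assms(2) by (simp add: u_def matrix_vector_mult_def algebra_simps sum.distrib
        if_distrib[of "(*) _"] cong: if_cong)
  have "4 * (\<Sum>r\<in>UNIV. (x $ r)\<^sup>2) = (\<Sum>r\<in>UNIV. (?B $ r $ a + s * ?B $ r $ b)\<^sup>2)"
    unfolding Bu[symmetric] x[symmetric] by (simp add: sum_distrib_left power2_eq_square)
  also have "\<dots> = (transpose ?B ** ?B) $ a $ a + 2 * s * (transpose ?B ** ?B) $ a $ b
      + s\<^sup>2 * (transpose ?B ** ?B) $ b $ b"
    by (simp add: matrix_matrix_mult_def transpose_def power2_eq_square algebra_simps
        sum.distrib sum_distrib_left)
  also have "\<dots> = 56"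
    using assms(2,3) by (auto simp: transpose_mul_double_frame mat_def)
  finally have norm_x: "(\<Sum>r\<in>UNIV. (x $ r)\<^sup>2) = 14"
    by simp
  have "\<bar>2 * x $ k\<bar> = 4" "\<bar>2 * x $ i\<bar> = 4"
    using fours unfolding trans[OF x Bu] by simp_all
  then have "\<bar>x $ k\<bar> = 2" "\<bar>x $ i\<bar> = 2"
    by (simp_all add: abs_mult)
  then have "int (card {r. x $ r \<noteq> 0}) + 6 \<le> 14"
    using card_nonzero_plus_6_le_sum_squares[of k i "\<lambda>r. x $ r"] assms(1) norm_x by simp
  moreover have "card {r. reduce x $ r \<noteq> 0} \<le> card {r. x $ r \<noteq> 0}"
    by (intro card_mono Collect_mono) (auto simp del: of_int_eq_0_iff)
  ultimately have "hamming_weight (reduce x) \<le> 8"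
    unfolding hamming_weight_def by linarith
  moreover have "reduce x \<noteq> 0"
  proof
    assume "reduce x = 0"
    then have "(of_int (x $ k) :: 'p mod_ring) = of_int 0"
      by (metis of_int_0 vec_lambda_beta zero_index)
    moreover have "x $ k = 2 \<or> x $ k = -2"
      using \<open>\<bar>x $ k\<bar> = 2\<close> by linarith
    ultimately show False
      unfolding of_int_mod_ring_eq_iff card_p by auto
  qed
  ultimately show False
    using min_weight_le_hamming_weight[OF \<open>reduce x \<in> C\<close>] min_weight_C by simp
qed


definition pivot_sign :: "'n \<Rightarrow> int" where
  "pivot_sign k = sgn (double_frame $ k $ pivot k)"

definition pivot_matrix :: "int^'n^'n" where
  "pivot_matrix = (\<chi> k i. pivot_sign k * double_frame $ i $ pivot k)"

lemma pivot_sign_mult_self: "pivot_sign k * pivot_sign k = 1"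
  using abs_double_frame_pivot[of k] by (auto simp: pivot_sign_def)

lemma pivot_matrix_diag: "pivot_matrix $ k $ k = 3"
proof -
  have "sgn x * x = 3" if "\<bar>x\<bar> = 3" for x :: int
    using that by (metis abs_sgn mult.commute)
  then show ?thesis
    using abs_double_frame_pivot[of k] by (simp add: pivot_matrix_def pivot_sign_def)
qed

lemma pivot_matrix_off_diag:
  assumes "k \<noteq> i"
  shows "pivot_matrix $ k $ i = 1 \<or> pivot_matrix $ k $ i = -1"
proof -
  have "\<bar>pivot_matrix $ k $ i\<bar> = 1"
    using abs_double_frame_pivot[of k] abs_double_frame_pivot_column[OF assms[symmetric]]
    by (auto simp: pivot_matrix_def pivot_sign_def abs_mult)
  then show ?thesis
    by linarith
qed

lemma pivot_matrix_skew:
  assumes "k \<noteq> i"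
  shows "pivot_matrix $ k $ i = - pivot_matrix $ i $ k"
proof -
  have "pivot k \<noteq> pivot i"
    using bij_is_inj[OF bij_pivot] assms by (auto dest: injD)
  have "sgn (double_frame $ k $ pivot k) * double_frame $ i $ pivot k
      = - (sgn (double_frame $ i $ pivot i) * double_frame $ k $ pivot i)"
    using abs_double_frame_pivot abs_double_frame_pivot_column assms
      no_double_four[OF assms \<open>pivot k \<noteq> pivot i\<close>]
    by (intro sgn_mult_eq_minus_sgn_mult) auto
  then show ?thesis
    by (simp add: pivot_matrix_def pivot_sign_def)
qed

lemma pivot_matrix_add_transpose: "pivot_matrix + transpose pivot_matrix = mat 6"
proof -
  have "(pivot_matrix + transpose pivot_matrix) $ k $ i = mat 6 $ k $ i" for k i
    using pivot_matrix_diag[of k] pivot_matrix_skew[of k i]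
    by (cases "k = i") (simp_all add: transpose_def mat_def)
  then show ?thesis
    by (simp add: vec_eq_iff)
qed

lemma pivot_matrix_mul_transpose: "pivot_matrix ** transpose pivot_matrix = mat (int CARD('n) + 8)"
proof -
  have "(pivot_matrix ** transpose pivot_matrix) $ k $ l
      = pivot_sign k * pivot_sign l * (transpose double_frame ** double_frame) $ pivot k $ pivot l"
    for k l
    by (simp add: pivot_matrix_def matrix_matrix_mult_def transpose_def sum_distrib_left
        algebra_simps)
  moreover have "pivot k = pivot l \<longleftrightarrow> k = l" for k l
    using bij_is_inj[OF bij_pivot] by (auto dest: injD)
  ultimately show ?thesis
    by (simp add: vec_eq_iff transpose_mul_double_frame mat_def card_n pivot_sign_mult_self)
qed

lemma skew_hadamard_pivot_matrix: "skew_hadamard_matrix (pivot_matrix - mat 2)"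
  using pivot_matrix_diag pivot_matrix_off_diag pivot_matrix_mul_transpose pivot_matrix_add_transpose
  by (rule skew_hadamard_matrix_diff_mat_2)

lemma code_eq_span_rows: "C = vec.span {row k (mat_mod pivot_matrix :: 'p mod_ring^'n^'n) | k. True}"
proof -
  let ?R = "{row k (mat_mod pivot_matrix :: 'p mod_ring^'n^'n) | k. True}"
  have row_eq:
    "row k (mat_mod pivot_matrix) = of_int (pivot_sign k) *s column (pivot k) (mat_mod double_frame :: 'p mod_ring^'n^'n)"
    for k
    by (simp add: vec_eq_iff row_def column_def mat_mod_def pivot_matrix_def)
  have "?R \<subseteq> C"
    using row_eq vec.subspace_scale[OF subspace_C column_in_code] by auto
  moreover have "columns (mat_mod double_frame :: 'p mod_ring^'n^'n) \<subseteq> vec.span ?R"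
  proof
    fix v
    assume "v \<in> columns (mat_mod double_frame :: 'p mod_ring^'n^'n)"
    then obtain a where "v = column a (mat_mod double_frame)"
      unfolding columns_def by blast
    moreover obtain k where "a = pivot k"
      using surjD[OF bij_is_surj[OF bij_pivot]] by blast
    ultimately have "v = column (pivot k) (mat_mod double_frame)"
      by simp
    then have "v = of_int (pivot_sign k) *s row k (mat_mod pivot_matrix :: 'p mod_ring^'n^'n)"
      using pivot_sign_mult_self[of k] by (simp add: row_eq vector_smult_assoc flip: of_int_mult)
    then show "v \<in> vec.span ?R"
      by (auto intro: vec.span_scale vec.span_base)
  qed
  ultimately show ?thesis
    using code_eq_span_columns vec.span_minimal[OF _ vec.subspace_span] vec.span_minimal[OF _ subspace_C]
    by (metis (no_types, lifting) antisym)
qed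

end

theorem proposition1:
  fixes C :: "('p::prime_card mod_ring ^ 'n) set"
  assumes "CARD('p) = 7"
    and "CARD('n) = 20"
    and "is_nkd_code 20 10 9 C"
    and "self_dual C"
    and "lattice_iso (constructionA C) D_plus_lattice"
  shows "\<exists>H :: int ^ 'n ^ 'n. skew_hadamard_matrix H \<and>
           C = vec.span {row i (mat_mod (H + mat 2) :: 'p mod_ring ^ 'n ^ 'n) | i. True}"
proof -
  obtain A where "orthogonal_matrix A" "D_plus_lattice = (\<lambda>x. x v* A) ` constructionA C"
    using assms(5) unfolding lattice_iso_def by blast
  then interpret D20_plus_code C A
    using assms(1-3) unfolding is_nkd_code_def by unfold_locales auto
  show ?thesis
    using skew_hadamard_pivot_matrix code_eq_span_rows by (intro exI[of _ "pivot_matrix - mat 2"]) simp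
qed

end
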